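(* Let $n\ge 1$ and $\psi,\eta\in(0,1)^n$. Let $Y\in\{0,1\}$ be a random bit with $\mathbb{P}(Y=1)=\mathbb{P}(Y=0)=1/2$, and conditionally on $Y$ let $X_1,\ldots,X_n\in\{0,1\}$ be independent with $\mathbb{P}(X_i=1\mid Y=1)=\psi_i$ and $\mathbb{P}(X_i=0\mid Y=0)=\eta_i$. Let $f^{\mathrm{OPT}}:\{0,1\}^n\to\{0,1\}$ be a decision rule minimizing $\mathbb{P}(f(X)\neq Y)$ over all $f:\{0,1\}^n\to\{0,1\}$, where $X=(X_1,\ldots,X_n)$. Then, with $\pi_i=(\psi_i+\eta_i)/2$, $$\mathbb{P}(f^{\mathrm{OPT}}(X)\neq Y)\le\frac12\sqrt{\prod_{i=1}^n(\psi_i+\eta_i)(2-\psi_i-\eta_i)}=\frac12\cdot 2^n\sqrt{\prod_{i=1}^n\pi_i(1-\pi_i)} .$$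
   Context: $\pi_i=(\psi_i+\eta_i)/2$ is called the balanced accuracy of expert $i$; $\psi_i$ is its sensitivity and $\eta_i$ its specificity. *)

theory Defs
  imports "HOL-Analysis.Analysis"
begin

text \<open>Bits are encoded as bool (True = 1, False = 0). An observation
  X = (X_0,...,X_{n-1}) in {0,1}^n is an extensional function in
  PiE {..<n} (\<lambda>_. UNIV).\<close>

definition obs_space :: "nat \<Rightarrow> (nat \<Rightarrow> bool) set" where
  "obs_space n = PiE {..<n} (\<lambda>_. UNIV)"

definition joint_prob ::
  "nat \<Rightarrow> (nat \<Rightarrow> real) \<Rightarrow> (nat \<Rightarrow> real) \<Rightarrow> (nat \<Rightarrow> bool) \<Rightarrow> bool \<Rightarrow> real" where
  "joint_prob n psi eta x y =
     (1/2) * (\<Prod>i<n. if y then (if x i then psi i else 1 - psi i)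
                           else (if x i then 1 - eta i else eta i))"

definition err_prob ::
  "nat \<Rightarrow> (nat \<Rightarrow> real) \<Rightarrow> (nat \<Rightarrow> real) \<Rightarrow> ((nat \<Rightarrow> bool) \<Rightarrow> bool) \<Rightarrow> real" where
  "err_prob n psi eta f =
     (\<Sum>x\<in>obs_space n. \<Sum>y\<in>(UNIV :: bool set).
        if f x \<noteq> y then joint_prob n psi eta x y else 0)"

definition bal_acc :: "(nat \<Rightarrow> real) \<Rightarrow> (nat \<Rightarrow> real) \<Rightarrow> nat \<Rightarrow> real" where
  "bal_acc psi eta i = (psi i + eta i) / 2"

end

theory Submission
  imports Defs
begin

text \<open>Bound the optimal error by that of the maximum a posteriori (Bayes) rule, which
  errs with probability \<open>\<Sum>\<^sub>x min (p x) (q x)\<close> where \<open>p x\<close>, \<open>q x\<close> are the joint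
  probabilities of \<open>(x, 1)\<close> and \<open>(x, 0)\<close>. Since \<open>min p q \<le> sqrt (p q)\<close> and \<open>p\<close>, \<open>q\<close> are
  product measures, the resulting Bhattacharyya coefficient factorises over the experts into
  \<open>1/2 \<Prod>\<^sub>i (sqrt (\<psi>\<^sub>i (1 - \<eta>\<^sub>i)) + sqrt ((1 - \<psi>\<^sub>i) \<eta>\<^sub>i))\<close>, and each factor is at most
  \<open>sqrt ((\<psi>\<^sub>i + \<eta>\<^sub>i) (2 - \<psi>\<^sub>i - \<eta>\<^sub>i))\<close> by the Cauchy-Schwarz inequality in the plane.\<close>

lemma real_sqrt_prod: "sqrt (prod f A) = (\<Prod>i\<in>A. sqrt (f i))"
  by (induction A rule: infinite_finite_induct) (auto simp: real_sqrt_mult)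

lemma min_le_sqrt_mult:
  fixes a b :: real
  assumes "0 \<le> a" "0 \<le> b"
  shows "min a b \<le> sqrt (a * b)"
proof -
  have "min a b = sqrt (min a b * min a b)"
    using assms by simp
  also have "\<dots> \<le> sqrt (a * b)"
    using assms by (intro real_sqrt_le_mono mult_mono) auto
  finally show ?thesis .
qed

lemma sqrt_mult_add_sqrt_mult_le:
  fixes a b c d :: real
  assumes "0 \<le> a" "0 \<le> b" "0 \<le> c" "0 \<le> d"
  shows "sqrt (a * c) + sqrt (b * d) \<le> sqrt ((a + b) * (c + d))"
proof -
  have amgm: "2 * sqrt ((a * d) * (b * c)) \<le> a * d + b * c"
    using arith_geo_mean_sqrt[of "a * d" "b * c"] assms by simp
  have "(sqrt (a * c) + sqrt (b * d))\<^sup>2 = a * c + b * d + 2 * sqrt ((a * d) * (b * c))"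
    using assms by (simp add: power2_sum real_sqrt_mult[symmetric] ac_simps)
  also have "\<dots> \<le> (a + b) * (c + d)"
    using amgm by (simp add: algebra_simps)
  finally show ?thesis
    using real_le_rsqrt by blast
qed

lemma joint_prob_nonneg:
  assumes "\<And>i. i < n \<Longrightarrow> 0 \<le> psi i \<and> psi i \<le> 1"
    and "\<And>i. i < n \<Longrightarrow> 0 \<le> eta i \<and> eta i \<le> 1"
  shows "0 \<le> joint_prob n psi eta x y"
  unfolding joint_prob_def using assms by (auto intro!: prod_nonneg)

definition bayes_rule :: "nat \<Rightarrow> (nat \<Rightarrow> real) \<Rightarrow> (nat \<Rightarrow> real) \<Rightarrow> (nat \<Rightarrow> bool) \<Rightarrow> bool" where
  "bayes_rule n psi eta x \<longleftrightarrow> joint_prob n psi eta x False < joint_prob n psi eta x True"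

lemma err_prob_bayes_rule:
  "err_prob n psi eta (bayes_rule n psi eta)
     = (\<Sum>x\<in>obs_space n. min (joint_prob n psi eta x True) (joint_prob n psi eta x False))"
  unfolding err_prob_def bayes_rule_def by (intro sum.cong) (auto simp: UNIV_bool min_def)

lemma sum_sqrt_joint_prob:
  "(\<Sum>x\<in>obs_space n. sqrt (joint_prob n psi eta x True * joint_prob n psi eta x False))
     = 1/2 * (\<Prod>i<n. sqrt (psi i * (1 - eta i)) + sqrt ((1 - psi i) * eta i))"
proof -
  define s where "s i b = sqrt (if b then psi i * (1 - eta i) else (1 - psi i) * eta i)" for i b
  have pointwise: "sqrt (joint_prob n psi eta x True * joint_prob n psi eta x False)
                    = 1/2 * (\<Prod>i<n. s i (x i))" for x
    by (simp add: joint_prob_def s_def real_sqrt_mult real_sqrt_prod real_sqrt_divide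
        prod.distrib[symmetric] if_distrib mult.commute cong: if_cong)
  have "(\<Sum>x\<in>obs_space n. sqrt (joint_prob n psi eta x True * joint_prob n psi eta x False))
          = (\<Sum>x\<in>obs_space n. 1/2 * (\<Prod>i<n. s i (x i)))"
    by (rule sum.cong[OF refl pointwise])
  also have "\<dots> = 1/2 * (\<Prod>i<n. \<Sum>b\<in>UNIV. s i b)"
    by (simp add: obs_space_def prod_sum_PiE sum_distrib_left)
  also have "\<dots> = 1/2 * (\<Prod>i<n. sqrt (psi i * (1 - eta i)) + sqrt ((1 - psi i) * eta i))"
    by (simp add: s_def UNIV_bool add.commute)
  finally show ?thesis .
qed

lemma err_prob_bayes_rule_le:
  assumes "\<And>i. i < n \<Longrightarrow> 0 \<le> psi i \<and> psi i \<le> 1"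
    and "\<And>i. i < n \<Longrightarrow> 0 \<le> eta i \<and> eta i \<le> 1"
  shows "err_prob n psi eta (bayes_rule n psi eta)
           \<le> 1/2 * sqrt (\<Prod>i<n. (psi i + eta i) * (2 - psi i - eta i))"
proof -
  have factor_le: "sqrt (psi i * (1 - eta i)) + sqrt ((1 - psi i) * eta i)
                     \<le> sqrt ((psi i + eta i) * (2 - psi i - eta i))" if "i < n" for i
  proof -
    have "sqrt (psi i * (1 - eta i)) + sqrt (eta i * (1 - psi i))
            \<le> sqrt ((psi i + eta i) * ((1 - eta i) + (1 - psi i)))"
      using assms that by (intro sqrt_mult_add_sqrt_mult_le) auto
    then show ?thesis
      by (simp add: algebra_simps)
  qed
  have "err_prob n psi eta (bayes_rule n psi eta)
          \<le> (\<Sum>x\<in>obs_space n. sqrt (joint_prob n psi eta x True * joint_prob n psi eta x False))"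
    unfolding err_prob_bayes_rule
    by (intro sum_mono min_le_sqrt_mult joint_prob_nonneg assms)
  also have "\<dots> = 1/2 * (\<Prod>i<n. sqrt (psi i * (1 - eta i)) + sqrt ((1 - psi i) * eta i))"
    by (rule sum_sqrt_joint_prob)
  also have "\<dots> \<le> 1/2 * (\<Prod>i<n. sqrt ((psi i + eta i) * (2 - psi i - eta i)))"
    using factor_le assms
    by (intro mult_left_mono prod_mono conjI add_nonneg_nonneg real_sqrt_ge_zero mult_nonneg_nonneg)
      auto
  also have "\<dots> = 1/2 * sqrt (\<Prod>i<n. (psi i + eta i) * (2 - psi i - eta i))"
    by (simp add: real_sqrt_prod)
  finally show ?thesis .
qed

lemma sqrt_prod_balanced_accuracy:
  "sqrt (\<Prod>i<n. (psi i + eta i) * (2 - psi i - eta i))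
     = 2 ^ n * sqrt (\<Prod>i<n. bal_acc psi eta i * (1 - bal_acc psi eta i))"
proof -
  have "(\<Prod>i<n. (psi i + eta i) * (2 - psi i - eta i))
          = (\<Prod>i<n. 2\<^sup>2 * (bal_acc psi eta i * (1 - bal_acc psi eta i)))"
    by (intro prod.cong) (auto simp: bal_acc_def field_simps)
  also have "\<dots> = (2 ^ n)\<^sup>2 * (\<Prod>i<n. bal_acc psi eta i * (1 - bal_acc psi eta i))"
    by (simp add: prod.distrib power_even_eq[symmetric] power_mult)
  finally show ?thesis
    by (simp add: real_sqrt_mult)
qed

theorem theorem2:
  fixes n :: nat and psi eta :: "nat \<Rightarrow> real"
    and f_opt :: "(nat \<Rightarrow> bool) \<Rightarrow> bool"
  assumes "n \<ge> 1"
    and "\<And>i. i < n \<Longrightarrow> 0 < psi i \<and> psi i < 1"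
    and "\<And>i. i < n \<Longrightarrow> 0 < eta i \<and> eta i < 1"
    and "\<And>f. err_prob n psi eta f_opt \<le> err_prob n psi eta f"
  shows "err_prob n psi eta f_opt
           \<le> (1/2) * sqrt (\<Prod>i<n. (psi i + eta i) * (2 - psi i - eta i))
       \<and> (1/2) * sqrt (\<Prod>i<n. (psi i + eta i) * (2 - psi i - eta i))
           = (1/2) * 2 ^ n * sqrt (\<Prod>i<n. bal_acc psi eta i * (1 - bal_acc psi eta i))"
proof
  have "err_prob n psi eta (bayes_rule n psi eta)
          \<le> 1/2 * sqrt (\<Prod>i<n. (psi i + eta i) * (2 - psi i - eta i))"
    using assms(2,3) by (intro err_prob_bayes_rule_le) (auto simp: less_imp_le)
  then show "err_prob n psi eta f_opt
               \<le> (1/2) * sqrt (\<Prod>i<n. (psi i + eta i) * (2 - psi i - eta i))"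
    using assms(4) order_trans by blast
  show "(1/2) * sqrt (\<Prod>i<n. (psi i + eta i) * (2 - psi i - eta i))
          = (1/2) * 2 ^ n * sqrt (\<Prod>i<n. bal_acc psi eta i * (1 - bal_acc psi eta i))"
    by (simp add: sqrt_prod_balanced_accuracy)
qed

end
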